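(* Let $\kappa$ be strongly inaccessible. Then $\mathrm{id}^-(\mathbb Q_\kappa)$ is ${<}\kappa^+$-complete: the union of at most $\kappa$ many members of $\mathrm{id}^-(\mathbb Q_\kappa)$ belongs to $\mathrm{id}^-(\mathbb Q_\kappa)$.
   Context: For a cardinal $\lambda$, $S^\lambda_{\mathrm{inc}}$ is the set of strongly inaccessible cardinals below $\lambda$. A set $S\subseteq\lambda$ is nowhere stationary if for every $\delta\le\lambda$ of uncountable cofinality, $S\cap\delta$ is nonstationary in $\delta$. By induction on strongly inaccessible $\lambda$ one defines a forcing $\mathbb Q_\lambda$ and an ideal $\mathrm{id}(\mathbb Q_\lambda)$ on $2^\lambda$: $p\in\mathbb Q_\lambda$ iff $p\subseteq 2^{<\lambda}$ is closed under initial segments and there is a witness $(\tau,S,\langle N_\delta:\delta\in S\rangle)$ with: (i) $\tau$ is the trunk of $p$, the least node of $p$ having two immediate successors in $p$; (ii) if $\tau\trianglelefteq\eta\in p$ then $\eta^\frown0,\eta^\frown1\in p$; (iii) $S\subseteq S^\lambda_{\mathrm{inc}}$ is nowhere stationary; (iv) $N_\delta\in\mathrm{id}(\mathbb Q_\delta)$ for $\delta\in S$; (v) for limit $\delta<\lambda$ with $\delta\notin S$ and $\eta\in2^\delta$: $\eta\in p$ iff $\eta\restriction\sigma\in p$ for all $\sigma<\delta$; (vi) for $\delta\in S$ and $\eta\in 2^\delta$: $\eta\in p$ iff $\eta\restriction\sigma\in p$ for all $\sigma<\delta$ and $\eta\notin N_\delta$. The order is $q\le p$ iff $q\subseteq p$.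 $[p]$ is the set of $x\in 2^\lambda$ all of whose proper initial segments lie in $p$; for $\mathcal J\subseteq\mathbb Q_\lambda$, $\mathrm{set}_0(\mathcal J)=2^\lambda\setminus\bigcup_{p\in\mathcal J}[p]$. $A\in\mathrm{id}(\mathbb Q_\lambda)$ iff there are at most $\lambda$ predense sets $\mathcal J_i\subseteq\mathbb Q_\lambda$ with $A\subseteq\bigcup_i\mathrm{set}_0(\mathcal J_i)$. $\mathrm{id}^-(\mathbb Q_\kappa)$ is the family of $A\subseteq 2^\kappa$ for which there are a nowhere stationary $S\subseteq S^\kappa_{\mathrm{inc}}$ and sets $N_\delta\in\mathrm{id}(\mathbb Q_\delta)$ ($\delta\in S$) with $A\subseteq\{\eta\in2^\kappa:\{\delta\in S:\eta\restriction\delta\in N_\delta\}\text{ is unbounded in }\kappa\}$. *)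

theory Defs imports Main "HOL-Library.Equipollence" begin

text \<open>Ordinals are modelled as elements of an arbitrary well-ordered type 'a.
 An element a stands for the ordinal given by the order type of the set of its
 predecessors.\<close>

definition below_set :: "'a::wellorder \<Rightarrow> 'a set" where
  "below_set a = {x. x < a}"

definition strongly_inaccessible :: "'a::wellorder \<Rightarrow> bool" where
  "strongly_inaccessible a \<longleftrightarrow>
     \<not> countable (below_set a)
   \<and> (\<forall>b<a. lesspoll (below_set b) (below_set a))
   \<and> (\<forall>b<a. lesspoll (Pow (below_set b)) (below_set a))
   \<and> (\<forall>X. X \<subseteq> below_set a \<and> (\<forall>y<a. \<exists>x\<in>X. y \<le> x) \<longrightarrow> lepoll (below_set a) X)"

definition S_inc :: "'a::wellorder \<Rightarrow> 'a set" where
  "S_inc l = {d. d < l \<and> strongly_inaccessible d}"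

definition is_limit :: "'a::wellorder \<Rightarrow> bool" where
  "is_limit d \<longleftrightarrow> (\<exists>y. y < d) \<and> (\<forall>y<d. \<exists>z. y < z \<and> z < d)"

definition uncountable_cf :: "'a::wellorder \<Rightarrow> bool" where
  "uncountable_cf d \<longleftrightarrow>
     (\<forall>X. X \<subseteq> below_set d \<and> (\<forall>y<d. \<exists>x\<in>X. y \<le> x) \<longrightarrow> \<not> countable X)"

definition club :: "'a::wellorder \<Rightarrow> 'a set \<Rightarrow> bool" where
  "club d C \<longleftrightarrow> C \<subseteq> below_set d \<and> (\<forall>y<d. \<exists>x\<in>C. y < x)
     \<and> (\<forall>g<d. is_limit g \<and> (\<forall>y<g. \<exists>x\<in>C. y < x \<and> x < g) \<longrightarrow> g \<in> C)"

definition stationary_in :: "'a::wellorder \<Rightarrow> 'a set \<Rightarrow> bool" where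
  "stationary_in d S \<longleftrightarrow> (\<forall>C. club d C \<longrightarrow> S \<inter> C \<noteq> {})"

definition nowhere_stationary :: "'a::wellorder \<Rightarrow> 'a set \<Rightarrow> bool" where
  "nowhere_stationary l S \<longleftrightarrow>
     (\<forall>d\<le>l. uncountable_cf d \<longrightarrow> \<not> stationary_in d (S \<inter> below_set d))"

text \<open>2^d: functions 'a => bool vanishing outside d\<close>
definition seqs :: "'a::wellorder \<Rightarrow> ('a \<Rightarrow> bool) set" where
  "seqs d = {f. \<forall>x. \<not> x < d \<longrightarrow> f x = False}"

text \<open>2^{<l}: pairs (length, sequence)\<close>
definition nodes :: "'a::wellorder \<Rightarrow> ('a \<times> ('a \<Rightarrow> bool)) set" where
  "nodes l = {(g, f). g < l \<and> f \<in> seqs g}"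

definition restr :: "('a::wellorder \<Rightarrow> bool) \<Rightarrow> 'a \<Rightarrow> ('a \<Rightarrow> bool)" where
  "restr f s = (\<lambda>x. if x < s then f x else False)"

definition init_seg :: "('a::wellorder \<times> ('a \<Rightarrow> bool)) \<Rightarrow> ('a \<times> ('a \<Rightarrow> bool)) \<Rightarrow> bool" where
  "init_seg u v \<longleftrightarrow> fst u \<le> fst v \<and> snd u = restr (snd v) (fst u)"

definition osucc :: "'a::wellorder \<Rightarrow> 'a" where
  "osucc g = (LEAST c. g < c)"

definition ext :: "('a::wellorder \<times> ('a \<Rightarrow> bool)) \<Rightarrow> bool \<Rightarrow> ('a \<times> ('a \<Rightarrow> bool))" where
  "ext v i = (osucc (fst v), (snd v)(fst v := i))"

definition is_trunk :: "('a::wellorder \<times> ('a \<Rightarrow> bool)) set \<Rightarrow> ('a \<times> ('a \<Rightarrow> bool)) \<Rightarrow> bool" where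
  "is_trunk p t \<longleftrightarrow> t \<in> p \<and> ext t False \<in> p \<and> ext t True \<in> p
     \<and> (\<forall>v\<in>p. ext v False \<in> p \<and> ext v True \<in> p \<longrightarrow> init_seg t v)"

text \<open>Q_l given the ideals ID d = id(Q_d) for smaller d\<close>
definition Qf :: "('a::wellorder \<Rightarrow> ('a \<Rightarrow> bool) set set) \<Rightarrow> 'a \<Rightarrow> ('a \<times> ('a \<Rightarrow> bool)) set set" where
  "Qf ID l = {p. p \<subseteq> nodes l \<and> (\<forall>v\<in>p. \<forall>u. init_seg u v \<longrightarrow> u \<in> p)
     \<and> (\<exists>t S N. is_trunk p t
        \<and> (\<forall>v\<in>p. init_seg t v \<longrightarrow> ext v False \<in> p \<and> ext v True \<in> p)
        \<and> S \<subseteq> S_inc l \<and> nowhere_stationary l S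
        \<and> (\<forall>d\<in>S. N d \<in> ID d)
        \<and> (\<forall>d<l. is_limit d \<and> d \<notin> S \<longrightarrow>
             (\<forall>f\<in>seqs d. (d, f) \<in> p \<longleftrightarrow> (\<forall>s<d. (s, restr f s) \<in> p)))
        \<and> (\<forall>d\<in>S. \<forall>f\<in>seqs d. (d, f) \<in> p \<longleftrightarrow> (\<forall>s<d. (s, restr f s) \<in> p) \<and> f \<notin> N d))}"

definition branches :: "'a::wellorder \<Rightarrow> ('a \<times> ('a \<Rightarrow> bool)) set \<Rightarrow> ('a \<Rightarrow> bool) set" where
  "branches l p = {x \<in> seqs l. \<forall>g<l. (g, restr x g) \<in> p}"

definition set0 :: "'a::wellorder \<Rightarrow> ('a \<times> ('a \<Rightarrow> bool)) set set \<Rightarrow> ('a \<Rightarrow> bool) set" where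
  "set0 l J = seqs l - (\<Union>p\<in>J. branches l p)"

definition predense :: "'t set set \<Rightarrow> 't set set \<Rightarrow> bool" where
  "predense Q J \<longleftrightarrow> J \<subseteq> Q \<and> (\<forall>p\<in>Q. \<exists>q\<in>J. \<exists>r\<in>Q. r \<subseteq> p \<and> r \<subseteq> q)"

definition idf :: "('a::wellorder \<Rightarrow> ('a \<Rightarrow> bool) set set) \<Rightarrow> 'a \<Rightarrow> ('a \<Rightarrow> bool) set set" where
  "idf ID l = {A. A \<subseteq> seqs l \<and> (\<exists>I J. I \<subseteq> below_set l
      \<and> (\<forall>i\<in>I. predense (Qf ID l) (J i)) \<and> A \<subseteq> (\<Union>i\<in>I. set0 l (J i)))}"

definition idQ :: "'a::wellorder \<Rightarrow> ('a \<Rightarrow> bool) set set" where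
  "idQ = wfrec {(x, y). x < y} (\<lambda>rec l. idf rec l)"

definition Q :: "'a::wellorder \<Rightarrow> ('a \<times> ('a \<Rightarrow> bool)) set set" where
  "Q l = Qf idQ l"

definition id_minus :: "'a::wellorder \<Rightarrow> ('a \<Rightarrow> bool) set set" where
  "id_minus k = {A. A \<subseteq> seqs k \<and> (\<exists>S N. S \<subseteq> S_inc k \<and> nowhere_stationary k S
      \<and> (\<forall>d\<in>S. N d \<in> idQ d)
      \<and> A \<subseteq> {x \<in> seqs k. \<forall>b<k. \<exists>d\<in>S. b \<le> d \<and> restr x d \<in> N d})}"

end

theory Submission
  imports Defs
begin

(*
  Index the family injectively by ordinals \<alpha> < k and merge the witnesses (S \<alpha>, N \<alpha>)
  diagonally: S = {\<delta>. \<exists>\<alpha> < \<delta>. \<delta> \<in> S \<alpha>} and N \<delta> = \<Union>{N \<alpha> \<delta> | \<alpha> < \<delta>, \<delta> \<in> S \<alpha>}.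
  As \<delta> is inaccessible, N \<delta> is a union of at most |\<delta>| members of id(Q_\<delta>), which is closed
  under such unions because \<delta> \<times> \<delta> \<approx> \<delta>.  A branch hitting N \<alpha> on an unbounded subset of
  S \<alpha> hits N on the same set above \<alpha>.  S is nowhere stationary: below a regular d of
  uncountable cofinality the diagonal intersection of clubs witnessing that the S \<alpha> are
  nonstationary is a club missing S; below a singular d, the limit points of a short cofinal
  subset of d form a club that contains no regular cardinal, while S consists of inaccessibles.
*)

lemma lepoll_iff_card_of_ordLeq: "A \<lesssim> B \<longleftrightarrow> ordLeq2 (card_of A) (card_of B)"
  by (simp add: lepoll_def card_of_ordLeq)

lemma UN_lepoll_infinite:
  assumes "infinite B" "I \<lesssim> B" "\<forall>i\<in>I. A i \<lesssim> B"
  shows "(\<Union>i\<in>I. A i) \<lesssim> B"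
  using assms unfolding lepoll_iff_card_of_ordLeq by (rule card_of_UNION_ordLeq_infinite)

definition is_regular :: "'a::wellorder \<Rightarrow> bool" where
  "is_regular d \<longleftrightarrow>
     (\<forall>b<d. \<forall>X. X \<subseteq> below_set d \<and> X \<lesssim> below_set b \<longrightarrow> (\<exists>w<d. \<forall>x\<in>X. x < w))"

lemma is_regularD:
  assumes "is_regular d" "b < d" "X \<subseteq> below_set d" "X \<lesssim> below_set b"
  shows "\<exists>w<d. \<forall>x\<in>X. x < w"
  using assms unfolding is_regular_def by blast

lemma uncountable_cf_exists_between:
  assumes "uncountable_cf d" "y < d"
  shows "\<exists>z. y < z \<and> z < d"
proof (rule ccontr)
  assume "\<not> (\<exists>z. y < z \<and> z < d)"
  then have "{y} \<subseteq> below_set d \<and> (\<forall>w<d. \<exists>x\<in>{y}. w \<le> x)"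
    using assms(2) unfolding below_set_def by (auto simp: not_less)
  with assms(1) show False unfolding uncountable_cf_def by auto
qed

lemma strongly_inaccessible_imp_uncountable_cf:
  assumes "strongly_inaccessible k"
  shows "uncountable_cf k"
  unfolding uncountable_cf_def
proof (intro allI impI)
  fix X assume "X \<subseteq> below_set k \<and> (\<forall>y<k. \<exists>x\<in>X. y \<le> x)"
  then have "below_set k \<lesssim> X" using assms unfolding strongly_inaccessible_def by blast
  moreover have "\<not> countable (below_set k)" using assms unfolding strongly_inaccessible_def by blast
  ultimately show "\<not> countable X" using countable_lepoll by blast
qed

lemma strongly_inaccessible_infinite_below:
  assumes "strongly_inaccessible k"
  shows "infinite (below_set k)"
proof -
  have "\<not> countable (below_set k)" using assms unfolding strongly_inaccessible_def by (elim conjE)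
  then show ?thesis using countable_finite by blast
qed

lemma strongly_inaccessible_imp_is_regular:
  assumes "strongly_inaccessible k"
  shows "is_regular k"
  unfolding is_regular_def
proof (intro allI impI)
  fix b X assume b: "b < k" and X: "X \<subseteq> below_set k \<and> X \<lesssim> below_set b"
  show "\<exists>w<k. \<forall>x\<in>X. x < w"
  proof (rule ccontr)
    assume "\<not> (\<exists>w<k. \<forall>x\<in>X. x < w)"
    then have "\<forall>y<k. \<exists>x\<in>X. y \<le> x" by (auto simp: not_less[symmetric])
    then have "below_set k \<lesssim> X" using X assms unfolding strongly_inaccessible_def by blast
    also have "X \<lesssim> below_set b" using X by blast
    also have "below_set b \<prec> below_set k" using b assms unfolding strongly_inaccessible_def by blast
    finally show False by simp
  qed
qed

text \<open>z is the supremum of the \<omega>-orbit of y under f; uncountable cofinality keeps it below d.\<close>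
lemma uncountable_cf_closure_point:
  fixes d :: "'a::wellorder"
  assumes d: "uncountable_cf d" and y: "y < d" and f: "\<forall>v<d. v < f v \<and> f v < d"
  shows "\<exists>z<d. y < z \<and> is_limit z \<and> (\<forall>u<z. \<exists>v. u < v \<and> v < z \<and> f v < z)"
proof -
  define s where "s n = (f ^^ n) y" for n
  have s_Suc: "s (Suc n) = f (s n)" for n unfolding s_def by simp
  have s_below: "s n < d" for n by (induction n) (use y f in \<open>auto simp: s_def\<close>)
  have "strict_mono s" unfolding strict_mono_Suc_iff using s_below s_Suc f by simp
  have "range s \<subseteq> below_set d" using s_below unfolding below_set_def by auto
  then have "\<not> (\<forall>w<d. \<exists>x\<in>range s. w \<le> x)" using d unfolding uncountable_cf_def by blast
  then obtain w where w: "w < d" "\<forall>n. s n < w" by (auto simp: not_le)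
  define z where "z = (LEAST w. \<forall>n. s n < w)"
  have "\<forall>n. s n < z" unfolding z_def by (rule LeastI[of _ w]) (use w in simp)
  then have s_less_z: "s n < z" for n by blast
  have "z \<le> w" unfolding z_def by (rule Least_le) (use w in simp)
  have orbit_cofinal: "\<exists>n. v < s n" if v: "v < z" for v
  proof (rule ccontr)
    assume "\<not> (\<exists>n. v < s n)"
    then have "s (Suc n) \<le> v" for n by (simp add: not_less)
    then have "s n < v" for n
      using strict_monoD[OF \<open>strict_mono s\<close> lessI] less_le_trans by blast
    then have "z \<le> v" unfolding z_def by (intro Least_le allI)
    with v show False by simp
  qed
  have "is_limit z"
    unfolding is_limit_def using s_less_z orbit_cofinal by blast
  moreover have "\<exists>v. u < v \<and> v < z \<and> f v < z" if "u < z" for u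
  proof -
    obtain n where "u < s n" using orbit_cofinal \<open>u < z\<close> by blast
    then show ?thesis using s_less_z s_Suc by metis
  qed
  moreover have "y < z" using s_less_z[of 0] unfolding s_def by simp
  moreover have "z < d" using \<open>z \<le> w\<close> w(1) by simp
  ultimately show ?thesis by blast
qed

lemma club_limit_points:
  fixes d :: "'a::wellorder"
  assumes d: "uncountable_cf d" and X: "X \<subseteq> below_set d" "\<forall>y<d. \<exists>x\<in>X. y \<le> x"
    and b: "b < d"
  shows "club d {\<gamma>. b < \<gamma> \<and> \<gamma> < d \<and> (\<forall>y<\<gamma>. \<exists>x\<in>X. y < x \<and> x < \<gamma>)}"
    (is "club d ?C")
  unfolding club_def
proof (intro conjI allI impI)
  show "?C \<subseteq> below_set d" unfolding below_set_def by auto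
next
  fix y assume "y < d"
  have "\<exists>x\<in>X. v < x" if "v < d" for v
    using uncountable_cf_exists_between[OF d that] X(2) less_le_trans by blast
  then obtain f where f: "\<forall>v<d. f v \<in> X \<and> v < f v" by metis
  then have "\<forall>v<d. v < f v \<and> f v < d" using X(1) unfolding below_set_def by blast
  moreover have "max y b < d" using \<open>y < d\<close> b by simp
  ultimately obtain z where z: "z < d" "max y b < z" "\<forall>u<z. \<exists>v. u < v \<and> v < z \<and> f v < z"
    using uncountable_cf_closure_point[OF d] by blast
  have "\<exists>x\<in>X. u < x \<and> x < z" if "u < z" for u
    using z(1,3) f that by (meson less_trans)
  then have "z \<in> ?C" using z(1,2) by simp
  then show "\<exists>x\<in>?C. y < x" using z(2) by auto
next
  fix \<gamma> assume "\<gamma> < d" and \<gamma>: "is_limit \<gamma> \<and> (\<forall>y<\<gamma>. \<exists>x\<in>?C. y < x \<and> x < \<gamma>)"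
  then have "b < \<gamma>" unfolding is_limit_def by force
  moreover have "\<exists>x\<in>X. y < x \<and> x < \<gamma>" if "y < \<gamma>" for y
  proof -
    obtain x where "x \<in> ?C" "y < x" "x < \<gamma>" using \<gamma> \<open>y < \<gamma>\<close> by blast
    then show ?thesis using less_trans by blast
  qed
  ultimately show "\<gamma> \<in> ?C" using \<open>\<gamma> < d\<close> by blast
qed

lemma not_stationary_regulars_below_singular:
  fixes d :: "'a::wellorder"
  assumes d: "uncountable_cf d" and "\<not> is_regular d"
  shows "\<not> stationary_in d (Collect is_regular)"
proof -
  obtain b X where b: "b < d" and X: "X \<subseteq> below_set d" "X \<lesssim> below_set b"
    and unbounded: "\<not> (\<exists>w<d. \<forall>x\<in>X. x < w)"
    using assms(2) unfolding is_regular_def by blast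
  then have cofinal: "\<forall>y<d. \<exists>x\<in>X. y \<le> x" by (auto simp: not_less[symmetric])
  define C where "C = {\<gamma>. b < \<gamma> \<and> \<gamma> < d \<and> (\<forall>y<\<gamma>. \<exists>x\<in>X. y < x \<and> x < \<gamma>)}"
  have "\<not> is_regular \<gamma>" if \<gamma>: "\<gamma> \<in> C" for \<gamma>
  proof
    assume "is_regular \<gamma>"
    moreover have "X \<inter> below_set \<gamma> \<lesssim> below_set b"
      using X(2) lepoll_trans subset_imp_lepoll by blast
    moreover have "b < \<gamma>" using \<gamma> unfolding C_def by blast
    ultimately obtain w where "w < \<gamma>" "\<forall>x\<in>X \<inter> below_set \<gamma>. x < w"
      unfolding is_regular_def by blast
    moreover obtain x where "x \<in> X" "w < x" "x < \<gamma>" using \<gamma> \<open>w < \<gamma>\<close> unfolding C_def by blast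
    ultimately have "x < w" "w < x" unfolding below_set_def by auto
    then show False by simp
  qed
  moreover have "club d C" unfolding C_def by (rule club_limit_points[OF d X(1) cofinal b])
  ultimately show ?thesis unfolding stationary_in_def by blast
qed

lemma is_regular_bound_clubs:
  fixes d :: "'a::wellorder"
  assumes d: "uncountable_cf d" "is_regular d" and v: "v < d" and C: "\<forall>\<alpha>\<in>J. club d (C \<alpha>)"
  shows "\<exists>w. v < w \<and> w < d \<and> (\<forall>\<alpha>\<in>J. \<alpha> < v \<longrightarrow> (\<exists>x\<in>C \<alpha>. v < x \<and> x < w))"
proof -
  define m where "m \<alpha> = (LEAST x. x \<in> C \<alpha> \<and> v < x)" for \<alpha>
  have m: "m \<alpha> \<in> C \<alpha> \<and> v < m \<alpha>" if \<alpha>: "\<alpha> \<in> J" for \<alpha>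
  proof -
    obtain x where "x \<in> C \<alpha>" "v < x" using C \<alpha> v unfolding club_def by blast
    then show ?thesis unfolding m_def by (intro LeastI[where P = "\<lambda>x. x \<in> C \<alpha> \<and> v < x"] conjI)
  qed
  have "m ` {\<alpha>\<in>J. \<alpha> < v} \<lesssim> {\<alpha>\<in>J. \<alpha> < v}" by (rule image_lepoll)
  also have "\<dots> \<lesssim> below_set v" by (rule subset_imp_lepoll) (auto simp: below_set_def)
  finally have "m ` {\<alpha>\<in>J. \<alpha> < v} \<lesssim> below_set v" .
  moreover have "m ` {\<alpha>\<in>J. \<alpha> < v} \<subseteq> below_set d" using m C unfolding club_def by fast
  ultimately obtain w1 where "w1 < d" "\<forall>x\<in>m ` {\<alpha>\<in>J. \<alpha> < v}. x < w1"
    using is_regularD[OF d(2) v] by blast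
  moreover obtain w2 where "v < w2" "w2 < d" using uncountable_cf_exists_between[OF d(1) v] by blast
  ultimately show ?thesis using m by (intro exI[of _ "max w1 w2"]) (fastforce simp: less_max_iff_disj)
qed

lemma diagonal_Inter_unbounded:
  fixes d :: "'a::wellorder"
  assumes d: "uncountable_cf d" "is_regular d" and C: "\<forall>\<alpha>\<in>J. club d (C \<alpha>)" and "y < d"
  shows "\<exists>z. y < z \<and> z < d \<and> (\<forall>\<alpha>\<in>J. \<alpha> < z \<longrightarrow> z \<in> C \<alpha>)"
proof -
  have "\<forall>v. \<exists>w. v < d \<longrightarrow> v < w \<and> w < d
      \<and> (\<forall>\<alpha>\<in>J. \<alpha> < v \<longrightarrow> (\<exists>x\<in>C \<alpha>. v < x \<and> x < w))"
    using is_regular_bound_clubs[OF d _ C] by blast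
  from choice[OF this] obtain f where f: "\<forall>v<d. v < f v \<and> f v < d
      \<and> (\<forall>\<alpha>\<in>J. \<alpha> < v \<longrightarrow> (\<exists>x\<in>C \<alpha>. v < x \<and> x < f v))"
    by blast
  then have "\<forall>v<d. v < f v \<and> f v < d" by blast
  then obtain z where z: "z < d" "y < z" "is_limit z" "\<forall>u<z. \<exists>v. u < v \<and> v < z \<and> f v < z"
    using uncountable_cf_closure_point[OF d(1) \<open>y < d\<close>] by blast
  have "z \<in> C \<alpha>" if \<alpha>: "\<alpha> \<in> J" "\<alpha> < z" for \<alpha>
  proof -
    have "\<exists>x\<in>C \<alpha>. u < x \<and> x < z" if "u < z" for u
    proof -
      have "max u \<alpha> < z" using \<open>u < z\<close> \<alpha>(2) by simp
      then obtain v where "max u \<alpha> < v" "v < z" "f v < z" using z(4) by blast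
      moreover have "v < d" using \<open>v < z\<close> z(1) by simp
      moreover have "u < v" "\<alpha> < v" using \<open>max u \<alpha> < v\<close> by auto
      ultimately obtain x where "x \<in> C \<alpha>" "v < x" "x < f v" using f \<alpha>(1) by blast
      then show ?thesis using \<open>u < v\<close> \<open>f v < z\<close> by (blast intro: less_trans)
    qed
    then show ?thesis using C \<alpha>(1) z(1,3) unfolding club_def by blast
  qed
  then show ?thesis using z(1,2) by blast
qed

lemma club_diagonal_Inter:
  fixes d :: "'a::wellorder"
  assumes d: "uncountable_cf d" "is_regular d" and C: "\<forall>\<alpha>\<in>J. club d (C \<alpha>)"
  shows "club d {\<gamma>. \<gamma> < d \<and> (\<forall>\<alpha>\<in>J. \<alpha> < \<gamma> \<longrightarrow> \<gamma> \<in> C \<alpha>)}" (is "club d ?D")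
  unfolding club_def
proof (intro conjI allI impI)
  show "?D \<subseteq> below_set d" unfolding below_set_def by auto
next
  fix y assume "y < d"
  then show "\<exists>x\<in>?D. y < x" using diagonal_Inter_unbounded[OF d C] by blast
next
  fix \<gamma> assume "\<gamma> < d" and \<gamma>: "is_limit \<gamma> \<and> (\<forall>y<\<gamma>. \<exists>x\<in>?D. y < x \<and> x < \<gamma>)"
  have "\<gamma> \<in> C \<alpha>" if \<alpha>: "\<alpha> \<in> J" "\<alpha> < \<gamma>" for \<alpha>
  proof -
    have "\<exists>x\<in>C \<alpha>. y < x \<and> x < \<gamma>" if "y < \<gamma>" for y
    proof -
      have "max y \<alpha> < \<gamma>" using \<open>y < \<gamma>\<close> \<alpha>(2) by simp
      then obtain x where "x \<in> ?D" "max y \<alpha> < x" "x < \<gamma>" using \<gamma> by blast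
      then show ?thesis using \<alpha>(1) by auto
    qed
    then show ?thesis using C \<alpha>(1) \<gamma> \<open>\<gamma> < d\<close> unfolding club_def by blast
  qed
  then show "\<gamma> \<in> ?D" using \<open>\<gamma> < d\<close> by blast
qed

definition diag_Union :: "'a::wellorder set \<Rightarrow> ('a \<Rightarrow> 'a set) \<Rightarrow> 'a set" where
  "diag_Union J S = {\<delta>. \<exists>\<alpha>\<in>J. \<alpha> < \<delta> \<and> \<delta> \<in> S \<alpha>}"

lemma nowhere_stationary_diag_Union:
  fixes k :: "'a::wellorder"
  assumes ns: "\<forall>\<alpha>\<in>J. nowhere_stationary k (S \<alpha>)"
    and regular: "\<forall>\<alpha>\<in>J. \<forall>\<delta>\<in>S \<alpha>. is_regular \<delta>"
  shows "nowhere_stationary k (diag_Union J S)"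
  unfolding nowhere_stationary_def
proof (intro allI impI)
  fix d assume "d \<le> k" "uncountable_cf d"
  show "\<not> stationary_in d (diag_Union J S \<inter> below_set d)"
  proof (cases "is_regular d")
    case True
    have "\<forall>\<alpha>\<in>J. \<exists>C. club d C \<and> S \<alpha> \<inter> below_set d \<inter> C = {}"
      using ns \<open>d \<le> k\<close> \<open>uncountable_cf d\<close> unfolding nowhere_stationary_def stationary_in_def
      by blast
    from bchoice[OF this] obtain C where C: "\<forall>\<alpha>\<in>J. club d (C \<alpha>) \<and> S \<alpha> \<inter> below_set d \<inter> C \<alpha> = {}"
      by blast
    then have "club d {\<gamma>. \<gamma> < d \<and> (\<forall>\<alpha>\<in>J. \<alpha> < \<gamma> \<longrightarrow> \<gamma> \<in> C \<alpha>)}"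
      using club_diagonal_Inter[OF \<open>uncountable_cf d\<close> True] by blast
    moreover have "diag_Union J S \<inter> below_set d \<inter> {\<gamma>. \<gamma> < d \<and> (\<forall>\<alpha>\<in>J. \<alpha> < \<gamma> \<longrightarrow> \<gamma> \<in> C \<alpha>)} = {}"
      using C unfolding diag_Union_def below_set_def by blast
    ultimately show ?thesis unfolding stationary_in_def by blast
  next
    case False
    have "diag_Union J S \<inter> below_set d \<subseteq> Collect is_regular"
      using regular unfolding diag_Union_def by blast
    then show ?thesis
      using not_stationary_regulars_below_singular[OF \<open>uncountable_cf d\<close> False]
      unfolding stationary_in_def by blast
  qed
qed

lemma mem_idf_iff:
  "A \<in> idf ID l \<longleftrightarrow> A \<subseteq> seqs l \<and> (\<exists>Js. Js \<lesssim> below_set l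
      \<and> (\<forall>J\<in>Js. predense (Qf ID l) J) \<and> A \<subseteq> (\<Union>J\<in>Js. set0 l J))"
proof
  assume "A \<in> idf ID l"
  then obtain I J where "A \<subseteq> seqs l" "I \<subseteq> below_set l" "\<forall>i\<in>I. predense (Qf ID l) (J i)"
    "A \<subseteq> (\<Union>i\<in>I. set0 l (J i))"
    unfolding idf_def by blast
  moreover have "J ` I \<lesssim> below_set l"
    using image_lepoll subset_imp_lepoll[OF \<open>I \<subseteq> below_set l\<close>] by (rule lepoll_trans)
  ultimately show "A \<subseteq> seqs l \<and> (\<exists>Js. Js \<lesssim> below_set l
      \<and> (\<forall>J\<in>Js. predense (Qf ID l) J) \<and> A \<subseteq> (\<Union>J\<in>Js. set0 l J))"
    by (intro conjI exI[of _ "J ` I"]) simp_all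
next
  assume "A \<subseteq> seqs l \<and> (\<exists>Js. Js \<lesssim> below_set l
      \<and> (\<forall>J\<in>Js. predense (Qf ID l) J) \<and> A \<subseteq> (\<Union>J\<in>Js. set0 l J))"
  then obtain Js h where "A \<subseteq> seqs l" "inj_on h Js" "h ` Js \<subseteq> below_set l"
    "\<forall>J\<in>Js. predense (Qf ID l) J" "A \<subseteq> (\<Union>J\<in>Js. set0 l J)"
    unfolding lepoll_def by blast
  moreover have "(\<Union>i\<in>h ` Js. set0 l (inv_into Js h i)) = (\<Union>J\<in>Js. set0 l J)"
    using \<open>inj_on h Js\<close> by (simp add: image_image cong: image_cong)
  moreover have "\<forall>i\<in>h ` Js. predense (Qf ID l) (inv_into Js h i)"
    using \<open>inj_on h Js\<close> \<open>\<forall>J\<in>Js. predense (Qf ID l) J\<close> by simp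
  ultimately show "A \<in> idf ID l"
    unfolding idf_def by (intro CollectI conjI exI[of _ "h ` Js"] exI[of _ "inv_into Js h"]) simp_all
qed

lemma idf_UN:
  assumes "infinite (below_set l)" "K \<lesssim> below_set l" and F: "\<forall>k\<in>K. F k \<in> idf ID l"
  shows "(\<Union>k\<in>K. F k) \<in> idf ID l"
proof -
  have "\<forall>k\<in>K. \<exists>Js. F k \<subseteq> seqs l \<and> Js \<lesssim> below_set l
      \<and> (\<forall>J\<in>Js. predense (Qf ID l) J) \<and> F k \<subseteq> (\<Union>J\<in>Js. set0 l J)"
  proof
    fix k assume "k \<in> K"
    show "\<exists>Js. F k \<subseteq> seqs l \<and> Js \<lesssim> below_set l
      \<and> (\<forall>J\<in>Js. predense (Qf ID l) J) \<and> F k \<subseteq> (\<Union>J\<in>Js. set0 l J)"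
      using F \<open>k \<in> K\<close> mem_idf_iff[of "F k" ID l] by blast
  qed
  then obtain Js where Js: "\<forall>k\<in>K. F k \<subseteq> seqs l \<and> Js k \<lesssim> below_set l
      \<and> (\<forall>J\<in>Js k. predense (Qf ID l) J) \<and> F k \<subseteq> (\<Union>J\<in>Js k. set0 l J)"
    by (rule bchoice[THEN exE])
  then have "(\<Union>k\<in>K. Js k) \<lesssim> below_set l"
    by (intro UN_lepoll_infinite[OF assms(1,2)]) blast
  moreover have "(\<Union>k\<in>K. F k) \<subseteq> (\<Union>J\<in>(\<Union>k\<in>K. Js k). set0 l J)"
  proof
    fix x assume "x \<in> (\<Union>k\<in>K. F k)"
    then obtain k where "k \<in> K" "x \<in> F k" by blast
    then obtain J where "J \<in> Js k" "x \<in> set0 l J" using Js by blast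
    then show "x \<in> (\<Union>J\<in>(\<Union>k\<in>K. Js k). set0 l J)" using \<open>k \<in> K\<close> by blast
  qed
  moreover have "(\<Union>k\<in>K. F k) \<subseteq> seqs l" using Js by blast
  moreover have "\<forall>J\<in>(\<Union>k\<in>K. Js k). predense (Qf ID l) J" using Js by blast
  ultimately show ?thesis unfolding mem_idf_iff by (intro conjI exI[of _ "\<Union>k\<in>K. Js k"])
qed

lemma idQ_eq_idf: "idQ l = idf (cut idQ {(x, y). x < y} l) l"
  unfolding idQ_def by (rule wfrec[OF wellorder_class.wf])

lemma idQ_UN:
  assumes "infinite (below_set l)" "K \<lesssim> below_set l" "\<forall>k\<in>K. F k \<in> idQ l"
  shows "(\<Union>k\<in>K. F k) \<in> idQ l"
  using idf_UN[OF assms(1,2)] assms(3) unfolding idQ_eq_idf[of l] .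

definition cofinally_in :: "'a::wellorder \<Rightarrow> 'a set \<Rightarrow> ('a \<Rightarrow> ('a \<Rightarrow> bool) set) \<Rightarrow> ('a \<Rightarrow> bool) set"
  where "cofinally_in k S N = {x \<in> seqs k. \<forall>b<k. \<exists>d\<in>S. b \<le> d \<and> restr x d \<in> N d}"

lemma mem_id_minus_iff:
  "A \<in> id_minus k \<longleftrightarrow> A \<subseteq> seqs k \<and> (\<exists>S N. S \<subseteq> S_inc k \<and> nowhere_stationary k S
      \<and> (\<forall>d\<in>S. N d \<in> idQ d) \<and> A \<subseteq> cofinally_in k S N)"
  unfolding id_minus_def cofinally_in_def by blast

lemma cofinally_in_diag_Union:
  fixes k :: "'a::wellorder"
  assumes "uncountable_cf k" "\<alpha> \<in> J" "\<alpha> < k"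
  shows "cofinally_in k (S \<alpha>) (N \<alpha>)
    \<subseteq> cofinally_in k (diag_Union J S) (\<lambda>\<delta>. \<Union>\<beta>\<in>{\<beta>\<in>J. \<beta> < \<delta> \<and> \<delta> \<in> S \<beta>}. N \<beta> \<delta>)"
proof
  fix x assume x: "x \<in> cofinally_in k (S \<alpha>) (N \<alpha>)"
  obtain y where "\<alpha> < y" "y < k" using uncountable_cf_exists_between[OF assms(1,3)] by blast
  have "\<exists>\<delta>\<in>diag_Union J S. b \<le> \<delta> \<and> restr x \<delta> \<in> (\<Union>\<beta>\<in>{\<beta>\<in>J. \<beta> < \<delta> \<and> \<delta> \<in> S \<beta>}. N \<beta> \<delta>)"
    if "b < k" for b
  proof -
    have "max b y < k" using \<open>b < k\<close> \<open>y < k\<close> by simp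
    then obtain \<delta> where "\<delta> \<in> S \<alpha>" "max b y \<le> \<delta>" "restr x \<delta> \<in> N \<alpha> \<delta>"
      using x unfolding cofinally_in_def by blast
    moreover have "\<alpha> < \<delta>" using \<open>\<alpha> < y\<close> \<open>max b y \<le> \<delta>\<close> by (auto intro: less_le_trans)
    ultimately show ?thesis unfolding diag_Union_def using assms(2) by auto
  qed
  then show "x \<in> cofinally_in k (diag_Union J S) (\<lambda>\<delta>. \<Union>\<beta>\<in>{\<beta>\<in>J. \<beta> < \<delta> \<and> \<delta> \<in> S \<beta>}. N \<beta> \<delta>)"
    using x unfolding cofinally_in_def by blast
qed

lemma id_minus_UN:
  fixes k :: "'a::wellorder"
  assumes k: "strongly_inaccessible k" and J: "J \<subseteq> below_set k"
    and B: "\<forall>\<alpha>\<in>J. B \<alpha> \<in> id_minus k"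
  shows "(\<Union>\<alpha>\<in>J. B \<alpha>) \<in> id_minus k"
proof -
  have "\<forall>\<alpha>\<in>J. \<exists>S N. S \<subseteq> S_inc k \<and> nowhere_stationary k S \<and> (\<forall>d\<in>S. N d \<in> idQ d)
      \<and> B \<alpha> \<subseteq> cofinally_in k S N"
    using B unfolding mem_id_minus_iff by blast
  then obtain S where "\<forall>\<alpha>\<in>J. \<exists>N. S \<alpha> \<subseteq> S_inc k \<and> nowhere_stationary k (S \<alpha>)
      \<and> (\<forall>d\<in>S \<alpha>. N d \<in> idQ d) \<and> B \<alpha> \<subseteq> cofinally_in k (S \<alpha>) N"
    by (rule bchoice[THEN exE])
  then obtain N where SN: "\<forall>\<alpha>\<in>J. S \<alpha> \<subseteq> S_inc k \<and> nowhere_stationary k (S \<alpha>)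
      \<and> (\<forall>d\<in>S \<alpha>. N \<alpha> d \<in> idQ d) \<and> B \<alpha> \<subseteq> cofinally_in k (S \<alpha>) (N \<alpha>)"
    by (rule bchoice[THEN exE])
  define N' where "N' \<delta> = (\<Union>\<alpha>\<in>{\<alpha>\<in>J. \<alpha> < \<delta> \<and> \<delta> \<in> S \<alpha>}. N \<alpha> \<delta>)" for \<delta>
  have S_inc: "diag_Union J S \<subseteq> S_inc k"
    using SN unfolding diag_Union_def by blast
  have "\<forall>\<alpha>\<in>J. \<forall>\<delta>\<in>S \<alpha>. is_regular \<delta>"
    using SN strongly_inaccessible_imp_is_regular unfolding S_inc_def by blast
  then have "nowhere_stationary k (diag_Union J S)"
    using SN by (intro nowhere_stationary_diag_Union) simp_all
  moreover have "\<forall>\<delta>\<in>diag_Union J S. N' \<delta> \<in> idQ \<delta>"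
  proof
    fix \<delta> assume "\<delta> \<in> diag_Union J S"
    then have "strongly_inaccessible \<delta>" using S_inc unfolding S_inc_def by blast
    then show "N' \<delta> \<in> idQ \<delta>"
      unfolding N'_def using SN
      by (intro idQ_UN strongly_inaccessible_infinite_below subset_imp_lepoll) (auto simp: below_set_def)
  qed
  moreover have "B \<alpha> \<subseteq> cofinally_in k (diag_Union J S) N'" if "\<alpha> \<in> J" for \<alpha>
    using SN cofinally_in_diag_Union[OF strongly_inaccessible_imp_uncountable_cf[OF k] that]
      that J unfolding N'_def below_set_def by blast
  then have "(\<Union>\<alpha>\<in>J. B \<alpha>) \<subseteq> cofinally_in k (diag_Union J S) N'" by blast
  moreover have "(\<Union>\<alpha>\<in>J. B \<alpha>) \<subseteq> seqs k" using SN unfolding cofinally_in_def by blast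
  ultimately show ?thesis
    unfolding mem_id_minus_iff using S_inc by (intro conjI exI[of _ "diag_Union J S"] exI[of _ N'])
qed

theorem lemma3p7:
  fixes k :: "'a::wellorder" and I :: "'i set" and A :: "'i \<Rightarrow> ('a \<Rightarrow> bool) set"
  assumes "strongly_inaccessible k"
    and "lepoll I (below_set k)"
    and "\<forall>i\<in>I. A i \<in> id_minus k"
  shows "(\<Union>i\<in>I. A i) \<in> id_minus k"
proof -
  obtain g where g: "inj_on g I" "g ` I \<subseteq> below_set k"
    using assms(2) unfolding lepoll_def by blast
  have "(\<Union>i\<in>I. A i) = (\<Union>\<alpha>\<in>g ` I. A (inv_into I g \<alpha>))"
    using g(1) by simp
  also have "\<dots> \<in> id_minus k"
    using g(1) assms(3) by (intro id_minus_UN[OF assms(1) g(2)]) simp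
  finally show ?thesis .
qed

end
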